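(* Consider $n>1$ agents with states $\boldsymbol{x}_i(t)\in\mathbb{R}^d$ evolving by $\dot{\boldsymbol{x}}(t)=-L(t)\boldsymbol{x}(t)$, where $\boldsymbol{x}=[\boldsymbol{x}_1^\top,\dots,\boldsymbol{x}_n^\top]^\top\in\mathbb{R}^{dn}$ and $L(t)$ is the matrix-valued Laplacian of a matrix-weighted switching network $\mathcal{G}(t)$ satisfying Assumption 2 (described in the context). If the system achieves cluster consensus, namely there exists $\boldsymbol{x}^*\in\mathbb{R}^{dn}$ with $\lim_{t\to\infty}\boldsymbol{x}(t)=\boldsymbol{x}^*$, then $\lim_{t\to\infty}L(t)\boldsymbol{x}^*=\boldsymbol{0}$.
   Context: A matrix-weighted switching network $\mathcal{G}(t)=(\mathcal{V},\mathcal{E}(t),A(t))$ has node set $\mathcal{V}=\{1,\dots,n\}$ and edge set $\mathcal{E}(t)$; each edge $(i,j)\in\mathcal{E}(t)$ carries a symmetric weight $A_{ij}(t)\in\mathbb{R}^{d\times d}$ which is either positive (semi-)definite or negative (semi-)definite, with $A_{ij}(t)=A_{ji}(t)$, $A_{ii}(t)=0_{d\times d}$, and $A_{ij}(t)=0_{d\times d}$ if $(i,j)\notin\mathcal{E}(t)$. For such a weight, $|A_{ij}|=A_{ij}$ if $A_{ij}\succeq 0$ and $|A_{ij}|=-A_{ij}$ if $A_{ij}\preceq 0$; $\mathrm{sgn}(A_{ij})=1$ if $A_{ij}\succeq0$ (nonzero), $-1$ if $A_{ij}\preceq 0$ (nonzero), $0$ if $A_{ij}=0$. The agent dynamics are $\dot{\boldsymbol{x}}_i=-\sum_{j\in\mathcal{N}_i(t)}|A_{ij}(t)|(\boldsymbol{x}_i-\mathrm{sgn}(A_{ij}(t))\boldsymbol{x}_j)$,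 $\mathcal{N}_i(t)=\{j:(i,j)\in\mathcal{E}(t)\}$. With $A(t)=[A_{ij}(t)]\in\mathbb{R}^{dn\times dn}$ (block matrix) and $D(t)=\mathrm{diag}(D_1(t),\dots,D_n(t))$, $D_i(t)=\sum_{j\in\mathcal{N}_i(t)}|A_{ij}(t)|$, the matrix-valued Laplacian is $L(t)=D(t)-A(t)$, and the stacked dynamics read $\dot{\boldsymbol{x}}=-L(t)\boldsymbol{x}$. Assumption 1: there is a sequence $\{t_k\}_{k\in\mathbb{N}}$ with $t_0=0$, $t_k\to\infty$, $t_{k+1}-t_k\ge\alpha$ for some $\alpha>0$ and all $k$, and $\mathcal{G}(t)$ is constant on each $[t_k,t_{k+1})$. Assumption 2: Assumption 1 holds, and $\mathcal{G}(t)$ is always chosen from a finite set $\{\mathcal{G}_1,\dots,\mathcal{G}_M\}$, each $\mathcal{G}_i$ appearing infinitely many times in the sequence. Cluster consensus: there is a partition $\mathcal{V}_1,\dots,\mathcal{V}_l$ of $\mathcal{V}$ such that agents in the same part have the same limit $\lim_{t\to\infty}\boldsymbol{x}_i(t)$ and agents in different parts have different limits. *)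

theory Defs
  imports "HOL-Analysis.Analysis"
begin

text \<open>Matrix weights are d x d real matrices, type real^'d^'d; agents are indexed by a
finite type 'n; the stacked state lives in (real^'d)^'n (= R^{dn}).\<close>

definition psd_mat :: "real^'d^'d \<Rightarrow> bool" where
  "psd_mat M \<longleftrightarrow> (\<forall>v. 0 \<le> v \<bullet> (M *v v))"

definition nsd_mat :: "real^'d^'d \<Rightarrow> bool" where
  "nsd_mat M \<longleftrightarrow> (\<forall>v. v \<bullet> (M *v v) \<le> 0)"

definition sym_mat :: "real^'d^'d \<Rightarrow> bool" where
  "sym_mat M \<longleftrightarrow> transpose M = M"

definition mat_abs :: "real^'d^'d \<Rightarrow> real^'d^'d" where
  "mat_abs M = (if psd_mat M then M else - M)"

definition mat_sgn :: "real^'d^'d \<Rightarrow> real" where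
  "mat_sgn M = (if M = 0 then 0 else if psd_mat M then 1 else -1)"

text \<open>A matrix-weighted network on agents 'n, given by its weight function A i j
(edges are exactly the pairs with nonzero weight; pairs that are not edges carry 0).\<close>
definition matrix_weighted_network :: "('n \<Rightarrow> 'n \<Rightarrow> real^'d^'d) \<Rightarrow> bool" where
  "matrix_weighted_network A \<longleftrightarrow>
     (\<forall>i j. sym_mat (A i j) \<and> (psd_mat (A i j) \<or> nsd_mat (A i j)) \<and> A i j = A j i)
     \<and> (\<forall>i. A i i = 0)"

definition mlap :: "('n::finite \<Rightarrow> 'n \<Rightarrow> real^'d^'d) \<Rightarrow> (real^'d)^'n \<Rightarrow> (real^'d)^'n" where
  "mlap A x = (\<chi> i. (\<Sum>j\<in>UNIV. mat_abs (A i j)) *v (x $ i) - (\<Sum>j\<in>UNIV. A i j *v (x $ j)))"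

text \<open>Assumption 1 + Assumption 2 for a switching network G(t).\<close>
definition assumption2 :: "(real \<Rightarrow> 'n \<Rightarrow> 'n \<Rightarrow> real^'d^'d) \<Rightarrow> bool" where
  "assumption2 G \<longleftrightarrow>
     (\<exists>tk :: nat \<Rightarrow> real. \<exists>\<alpha>>0. \<exists>Gs.
        tk 0 = 0 \<and> filterlim tk at_top sequentially \<and>
        (\<forall>k. tk (Suc k) - tk k \<ge> \<alpha>) \<and>
        (\<forall>k. \<forall>t\<in>{tk k..<tk (Suc k)}. G t = G (tk k)) \<and>
        finite Gs \<and> (\<forall>H\<in>Gs. matrix_weighted_network H) \<and>
        (\<forall>t. G t \<in> Gs) \<and>
        (\<forall>H\<in>Gs. infinite {k. G (tk k) = H}))"

end

theory Submission
  imports Defs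
begin

(* Each of the finitely many networks H recurs on intervals of length at least \<alpha> arbitrarily
   late.  On such an interval [a, a + \<alpha>] the state obeys x' = -L_H x with L_H x close to
   L_H x*, since L_H is linear and x tends to x*; a mean value estimate for right derivatives
   then gives x(a + \<alpha>) - x(a) \<approx> -\<alpha> L_H x*.  The left side tends to 0, so L_H x* = 0,
   and in fact L(t) x* vanishes identically. *)

lemma bounded_linear_mlap: "bounded_linear (mlap A)"
proof -
  have "linear (mlap A)"
  proof (rule linearI)
    show "mlap A (x + y) = mlap A x + mlap A y" for x y
      by (simp add: mlap_def vec_eq_iff sum.distrib algebra_simps)
    show "mlap A (r *\<^sub>R x) = r *\<^sub>R mlap A x" for r x
      by (simp add: mlap_def vec_eq_iff scaleR_sum_right algebra_simps)
  qed
  then show ?thesis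
    by (simp add: linear_conv_bounded_linear)
qed

lemma norm_diff_le_right_derivative_bound_plus:
  fixes f :: "real \<Rightarrow> 'a::real_normed_vector"
  assumes "a \<le> b" and "e > 0" and cont: "continuous_on {a..b} f"
    and deriv: "\<And>s. s \<in> {a..<b} \<Longrightarrow> (f has_vector_derivative f' s) (at s within {s..})"
    and bound: "\<And>s. s \<in> {a..<b} \<Longrightarrow> norm (f' s) \<le> M"
  shows "norm (f b - f a) \<le> (M + e) * (b - a)"
proof -
  \<comment> \<open>Real induction: S is closed, and right differentiability at its supremum c < b would
    put points beyond c into S.\<close>
  define S where "S = {a..b} \<inter> (\<lambda>s. norm (f s - f a) - (M + e) * (s - a)) -` {..0}"
  have "closed S"
    unfolding S_def
    by (intro continuous_closed_preimage continuous_intros cont closed_atLeastAtMost closed_atMost)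
  moreover have "a \<in> S" "bdd_above S"
    using \<open>a \<le> b\<close> by (auto simp: S_def bdd_above_def)
  ultimately have c: "Sup S \<in> S" (is "?c \<in> S")
    by (metis closed_contains_Sup empty_iff)
  have "?c = b"
  proof (rule ccontr)
    assume "?c \<noteq> b"
    with c have "?c \<in> {a..<b}" by (auto simp: S_def)
    then have "(f has_derivative (\<lambda>h. h *\<^sub>R f' ?c)) (at ?c within {?c..})"
      using deriv by (simp add: has_vector_derivative_def)
    then obtain d where "d > 0" and d: "\<And>y. y \<in> {?c..} \<Longrightarrow> norm (y - ?c) < d \<Longrightarrow>
        norm (f y - f ?c - (y - ?c) *\<^sub>R f' ?c) \<le> e * norm (y - ?c)"
      using \<open>e > 0\<close> unfolding has_derivative_within_alt by blast
    define y where "y = min b (?c + d / 2)"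
    have "?c < y" "y \<le> b" "y - ?c < d"
      using \<open>d > 0\<close> \<open>?c \<in> {a..<b}\<close> by (auto simp: y_def)
    have "norm (f y - f ?c) \<le> norm (f y - f ?c - (y - ?c) *\<^sub>R f' ?c) + norm ((y - ?c) *\<^sub>R f' ?c)"
      by (metis diff_add_cancel norm_triangle_ineq)
    also have "\<dots> \<le> e * (y - ?c) + M * (y - ?c)"
      using d[of y] bound[OF \<open>?c \<in> {a..<b}\<close>] \<open>?c < y\<close> \<open>y - ?c < d\<close>
      by (intro add_mono) (auto simp: mult.commute intro: mult_right_mono)
    finally have "norm (f y - f ?c) \<le> (M + e) * (y - ?c)"
      by (simp add: algebra_simps)
    moreover have "norm (f ?c - f a) \<le> (M + e) * (?c - a)"
      using c by (simp add: S_def)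
    ultimately have "norm (f y - f a) \<le> (M + e) * (y - a)"
      using norm_triangle_ineq[of "f y - f ?c" "f ?c - f a"] by (simp add: algebra_simps)
    then have "y \<in> S"
      using \<open>?c \<in> {a..<b}\<close> \<open>?c < y\<close> \<open>y \<le> b\<close> by (simp add: S_def)
    then show False
      using cSup_upper[OF _ \<open>bdd_above S\<close>] \<open>?c < y\<close> by force
  qed
  with c show ?thesis
    by (simp add: S_def)
qed

lemma norm_diff_le_right_derivative_bound:
  fixes f :: "real \<Rightarrow> 'a::real_normed_vector"
  assumes "a \<le> b" and "continuous_on {a..b} f"
    and "\<And>s. s \<in> {a..<b} \<Longrightarrow> (f has_vector_derivative f' s) (at s within {s..})"
    and "\<And>s. s \<in> {a..<b} \<Longrightarrow> norm (f' s) \<le> M"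
  shows "norm (f b - f a) \<le> M * (b - a)"
proof (rule field_le_epsilon)
  fix e :: real
  assume "e > 0"
  then have "norm (f b - f a) \<le> (M + e / (b - a + 1)) * (b - a)"
    using assms by (intro norm_diff_le_right_derivative_bound_plus) auto
  also have "\<dots> \<le> M * (b - a) + e"
    using \<open>e > 0\<close> \<open>a \<le> b\<close> by (simp add: field_simps)
  finally show "norm (f b - f a) \<le> M * (b - a) + e" .
qed

lemma norm_diff_add_le_right_derivative_bound:
  fixes f :: "real \<Rightarrow> 'a::real_normed_vector"
  assumes "a \<le> b" and cont: "continuous_on {a..b} f"
    and deriv: "\<And>s. s \<in> {a..<b} \<Longrightarrow> (f has_vector_derivative f' s) (at s within {s..})"
    and bound: "\<And>s. s \<in> {a..<b} \<Longrightarrow> norm (f' s + v) \<le> e"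
  shows "norm (f b - f a + (b - a) *\<^sub>R v) \<le> e * (b - a)"
proof -
  have "norm ((f b + b *\<^sub>R v) - (f a + a *\<^sub>R v)) \<le> e * (b - a)"
  proof (rule norm_diff_le_right_derivative_bound
      [where f = "\<lambda>s. f s + s *\<^sub>R v" and f' = "\<lambda>s. f' s + v"])
    show "continuous_on {a..b} (\<lambda>s. f s + s *\<^sub>R v)"
      by (intro continuous_on_add cont continuous_on_scaleR continuous_on_id continuous_on_const)
    show "((\<lambda>s. f s + s *\<^sub>R v) has_vector_derivative f' s + v) (at s within {s..})"
      if "s \<in> {a..<b}" for s
      using deriv[OF that] by (auto intro!: derivative_eq_intros)
  qed (use assms in auto)
  then show ?thesis
    by (simp add: algebra_simps)
qed

lemma bounded_linear_vanishes_at_limit_of_recurrent_flow: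
  fixes x :: "real \<Rightarrow> 'a::real_normed_vector"
  assumes L: "bounded_linear L" and "\<beta> > 0"
    and lim: "(x \<longlongrightarrow> xstar) at_top"
    and windows: "\<And>T. \<exists>a\<ge>T. continuous_on {a..a + \<beta>} x \<and>
      (\<forall>s\<in>{a..<a + \<beta>}. (x has_vector_derivative - L (x s)) (at s within {s..}))"
  shows "L xstar = 0"
proof -
  have small: "norm (L xstar) < 3 * e" if "e > 0" for e
  proof -
    have "\<forall>\<^sub>F t in at_top. dist (L (x t)) (L xstar) < e"
      using bounded_linear.tendsto[OF L lim] \<open>e > 0\<close> by (simp add: tendsto_iff)
    moreover have "\<forall>\<^sub>F t in at_top. dist (x t) xstar < e * \<beta>"
      using lim \<open>e > 0\<close> \<open>\<beta> > 0\<close> by (simp add: tendsto_iff)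
    ultimately have "\<forall>\<^sub>F t in at_top. dist (L (x t)) (L xstar) < e \<and> dist (x t) xstar < e * \<beta>"
      by (rule eventually_conj)
    then obtain T where T: "\<And>t. t \<ge> T \<Longrightarrow>
        norm (L (x t) - L xstar) < e \<and> norm (x t - xstar) < e * \<beta>"
      unfolding eventually_at_top_linorder dist_norm by blast
    obtain a where "a \<ge> T" and cont: "continuous_on {a..a + \<beta>} x"
      and deriv: "\<And>s. s \<in> {a..<a + \<beta>} \<Longrightarrow> (x has_vector_derivative - L (x s)) (at s within {s..})"
      using windows by blast
    have "norm (x (a + \<beta>) - x a + (a + \<beta> - a) *\<^sub>R L xstar) \<le> e * (a + \<beta> - a)"
      using T \<open>a \<ge> T\<close> \<open>\<beta> > 0\<close>
      by (intro norm_diff_add_le_right_derivative_bound[OF _ cont deriv])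
        (auto simp: norm_minus_commute less_imp_le)
    then have "norm (\<beta> *\<^sub>R L xstar + (x (a + \<beta>) - x a)) \<le> e * \<beta>"
      by (simp add: algebra_simps)
    moreover have "norm (x (a + \<beta>) - x a) < 2 * (e * \<beta>)"
      using T[of a] T[of "a + \<beta>"] \<open>a \<ge> T\<close> \<open>\<beta> > 0\<close>
        norm_triangle_ineq4[of "x (a + \<beta>) - xstar" "x a - xstar"] by simp
    moreover have "\<beta> * norm (L xstar) \<le>
        norm (\<beta> *\<^sub>R L xstar + (x (a + \<beta>) - x a)) + norm (x (a + \<beta>) - x a)"
      using \<open>\<beta> > 0\<close> norm_triangle_ineq4[of "\<beta> *\<^sub>R L xstar + (x (a + \<beta>) - x a)" "x (a + \<beta>) - x a"]
      by simp
    ultimately have "\<beta> * norm (L xstar) < 3 * (e * \<beta>)"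
      by linarith
    then show ?thesis
      using \<open>\<beta> > 0\<close> by (simp add: mult.commute[of _ \<beta>] mult.left_commute[of _ \<beta>])
  qed
  have "norm (L xstar) \<le> 0"
  proof (rule field_le_epsilon)
    fix e :: real
    assume "e > 0"
    then show "norm (L xstar) \<le> 0 + e"
      using small[of "e / 3"] by simp
  qed
  then show ?thesis
    by simp
qed

lemma assumption2_recurrent_windows:
  assumes "assumption2 G"
  obtains \<alpha> :: real where "\<alpha> > 0" and "\<And>t T. \<exists>a\<ge>T. \<forall>s\<in>{a..<a + \<alpha>}. G s = G t"
proof -
  obtain tk :: "nat \<Rightarrow> real" and \<alpha> Gs where "\<alpha> > 0"
    and tk_lim: "filterlim tk at_top sequentially"
    and gap: "\<And>k. tk (Suc k) - tk k \<ge> \<alpha>"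
    and const: "\<And>k t. t \<in> {tk k..<tk (Suc k)} \<Longrightarrow> G t = G (tk k)"
    and in_Gs: "\<And>t. G t \<in> Gs"
    and recurrent: "\<And>H. H \<in> Gs \<Longrightarrow> infinite {k. G (tk k) = H}"
    using assms unfolding assumption2_def by metis
  have "\<exists>a\<ge>T. \<forall>s\<in>{a..<a + \<alpha>}. G s = G t" for t T
  proof -
    obtain N where N: "\<And>k. k \<ge> N \<Longrightarrow> tk k \<ge> T"
      using tk_lim unfolding filterlim_at_top eventually_sequentially by blast
    obtain k where "k \<ge> N" and "G (tk k) = G t"
      using recurrent[OF in_Gs[of t]] unfolding infinite_nat_iff_unbounded_le by blast
    have "G s = G t" if "s \<in> {tk k..<tk k + \<alpha>}" for s
      using const[of s k] gap[of k] that \<open>G (tk k) = G t\<close> by auto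
    then show ?thesis
      using N[OF \<open>k \<ge> N\<close>] by blast
  qed
  with \<open>\<alpha> > 0\<close> show ?thesis
    using that by blast
qed

theorem lemma3:
  fixes G :: "real \<Rightarrow> 'n::finite \<Rightarrow> 'n \<Rightarrow> real^'d^'d"
    and x :: "real \<Rightarrow> (real^'d)^'n"
    and xstar :: "(real^'d)^'n"
  assumes "CARD('n) > 1"
    and "assumption2 G"
    and "continuous_on {0..} x"
    and "\<And>t. t \<ge> 0 \<Longrightarrow> (x has_vector_derivative (- mlap (G t) (x t))) (at t within {t..})"
    and "(x \<longlongrightarrow> xstar) at_top"
  shows "((\<lambda>t. mlap (G t) xstar) \<longlongrightarrow> 0) at_top"
proof -
  obtain \<alpha> :: real where "\<alpha> > 0" and windows: "\<And>t T. \<exists>a\<ge>T. \<forall>s\<in>{a..<a + \<alpha>}. G s = G t"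
    using assumption2_recurrent_windows[OF assms(2)] by blast
  have "mlap (G t) xstar = 0" for t
  proof (rule bounded_linear_vanishes_at_limit_of_recurrent_flow
      [OF bounded_linear_mlap \<open>\<alpha> > 0\<close> assms(5)])
    fix T
    obtain a where "a \<ge> max T 0" and G_a: "\<forall>s\<in>{a..<a + \<alpha>}. G s = G t"
      using windows by blast
    then have "continuous_on {a..a + \<alpha>} x"
      by (intro continuous_on_subset[OF assms(3)]) auto
    moreover have "(x has_vector_derivative - mlap (G t) (x s)) (at s within {s..})"
      if "s \<in> {a..<a + \<alpha>}" for s
      using assms(4)[of s] G_a that \<open>a \<ge> max T 0\<close> by auto
    ultimately show "\<exists>a\<ge>T. continuous_on {a..a + \<alpha>} x \<and>
        (\<forall>s\<in>{a..<a + \<alpha>}. (x has_vector_derivative - mlap (G t) (x s)) (at s within {s..}))"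
      using \<open>a \<ge> max T 0\<close> by auto
  qed
  then show ?thesis
    by simp
qed

end
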